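(* Consider the value iteration algorithm described in the context, producing functions $V^n$ for $n\ge0$. Then for every $n\ge 0$, every $s\in\mathcal{S}$ and every $k\in\{1,\dots,K-1\}$, $$V^{n}(s,k+1)-V^{n}(s,k)\ \le\ V^{n}(s,k)-V^{n}(s,k-1).$$
   Context: Model (token-based D2D transmission for one user). Let $\mathcal{S}=\{s_0,s_1,\dots,s_N\}$ be a finite set of traffic types, where $s_0$ denotes the idle state. Each $s\in\mathcal{S}$ has a probability $p(s)\in(0,1)$ with $\sum_{s\in\mathcal{S}}p(s)=1$. Each non-idle type $s\in\{s_1,\dots,s_N\}$ has a benefit $b_s$, with $0<b_{s_1}<\dots<b_{s_N}$. Fix an integer $K\ge1$, a cost $c>0$, parameters $p,q\in(0,1)$ and a discount factor $\beta\in(0,1)$. States are $(s,k)$ with $s\in\mathcal{S}$, $k\in\{0,\dots,K\}$; actions are $a\in\{0,1\}$. Transition probabilities $P\{(s',k')\mid(s,k),a\}$: for $s\ne s_0,k>0$: $p(s')\{(1-a)+a(1-q)\}$ if $k'=k$, $p(s')qa$ if $k'=k-1$; for $s\ne s_0,k=0$: $p(s')$ if $k'=0$; for $s=s_0,k<K$: $p(s')\{a+(1-a)(1-p)\}$ if $k'=k$, $p(s')p(1-a)$ if $k'=k+1$; for $s=s_0,k=K$: $p(s')$ if $k'=K$; otherwise $0$. Expected rewards: $\mu(s_0,k,a)=-cp(1-a)$ and, for $s\ne s_0$, $\mu(s,k,a)=q\,a\,b_s\,I(k>0)$. Value iteration: $V^0(s,k)=0$ for all $(s,k)$. Given $V^n$,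 define the policy $\pi^{n+1}$ by $\pi^{n+1}(s,0)=0$ for $s\ne s_0$, $\pi^{n+1}(s_0,K)=1$; for $s\ne s_0$ and $k\ge1$, $\pi^{n+1}(s,k)=0$ if $\beta\sum_{s'\in\mathcal{S}}p(s')\{V^n(s',k)-V^n(s',k-1)\}\ge b_s$ and $\pi^{n+1}(s,k)=1$ otherwise; for $k<K$, $\pi^{n+1}(s_0,k)=0$ if $\beta\sum_{s'\in\mathcal{S}}p(s')\{V^n(s',k+1)-V^n(s',k)\}\ge c$ and $\pi^{n+1}(s_0,k)=1$ otherwise. Then $V^{n+1}(s,k)=\mu(s,k,\pi^{n+1}(s,k))+\beta\sum_{(s',k')}P\{(s',k')\mid(s,k),\pi^{n+1}(s,k)\}V^n(s',k')$. *)

theory Defs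
  imports Main "HOL.Real"
begin

text \<open>Traffic types are encoded as natural numbers 0..N, with 0 the idle type s0
  and i (1 \<le> i \<le> N) the non-idle type s_i.  pr is the type distribution p(s),
  b the benefit, and actions are the naturals 0 and 1.\<close>

definition trans :: "nat \<Rightarrow> (nat \<Rightarrow> real) \<Rightarrow> real \<Rightarrow> real \<Rightarrow>
    nat \<Rightarrow> nat \<Rightarrow> nat \<Rightarrow> nat \<Rightarrow> nat \<Rightarrow> real" where
  "trans K pr p q s k a s' k' =
    (let a' = real a in
     if s \<noteq> 0 \<and> 0 < k then
       (if k' = k then pr s' * ((1 - a') + a' * (1 - q))
        else if k' = k - 1 then pr s' * q * a' else 0)
     else if s \<noteq> 0 \<and> k = 0 then (if k' = 0 then pr s' else 0)
     else if s = 0 \<and> k < K then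
       (if k' = k then pr s' * (a' + (1 - a') * (1 - p))
        else if k' = k + 1 then pr s' * p * (1 - a') else 0)
     else if s = 0 \<and> k = K then (if k' = K then pr s' else 0)
     else 0)"

definition reward :: "(nat \<Rightarrow> real) \<Rightarrow> real \<Rightarrow> real \<Rightarrow> real \<Rightarrow> nat \<Rightarrow> nat \<Rightarrow> nat \<Rightarrow> real" where
  "reward b c p q s k a =
    (if s = 0 then - c * p * (1 - real a)
     else q * real a * b s * (if 0 < k then 1 else 0))"

definition policy :: "nat \<Rightarrow> nat \<Rightarrow> (nat \<Rightarrow> real) \<Rightarrow> (nat \<Rightarrow> real) \<Rightarrow> real \<Rightarrow> real \<Rightarrow>
    (nat \<Rightarrow> nat \<Rightarrow> real) \<Rightarrow> nat \<Rightarrow> nat \<Rightarrow> nat" where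
  "policy N K pr b c \<beta> W s k =
    (if s \<noteq> 0 then
       (if k = 0 then 0
        else if \<beta> * (\<Sum>s'\<in>{0..N}. pr s' * (W s' k - W s' (k - 1))) \<ge> b s then 0 else 1)
     else
       (if k = K then 1
        else if \<beta> * (\<Sum>s'\<in>{0..N}. pr s' * (W s' (k + 1) - W s' k)) \<ge> c then 0 else 1))"

primrec VI :: "nat \<Rightarrow> nat \<Rightarrow> (nat \<Rightarrow> real) \<Rightarrow> (nat \<Rightarrow> real) \<Rightarrow> real \<Rightarrow> real \<Rightarrow> real \<Rightarrow> real \<Rightarrow>
    nat \<Rightarrow> nat \<Rightarrow> nat \<Rightarrow> real" where
  "VI N K pr b c p q \<beta> 0 = (\<lambda>s k. 0)"
| "VI N K pr b c p q \<beta> (Suc n) =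
    (\<lambda>s k. let a = policy N K pr b c \<beta> (VI N K pr b c p q \<beta> n) s k in
       reward b c p q s k a
       + \<beta> * (\<Sum>s'\<in>{0..N}. \<Sum>k'\<in>{0..K}.
                 trans K pr p q s k a s' k' * VI N K pr b c p q \<beta> n s' k'))"

end

theory Submission
  imports Defs
begin

text \<open>With \<open>E\<^sup>n(k) = \<Sum>\<^sub>s p(s) V\<^sup>n(s,k)\<close> and the marginal value
  \<open>x\<^sub>k = \<beta> (E\<^sup>n(k) - E\<^sup>n(k-1))\<close>, the Bellman update collapses to
  \<open>V\<^sup>n\<^sup>+\<^sup>1(s,k) = \<beta> E\<^sup>n(k) + q (b\<^sub>s - x\<^sub>k)\<^sup>+\<close> for a busy type and
  \<open>V\<^sup>n\<^sup>+\<^sup>1(s\<^sub>0,k) = \<beta> E\<^sup>n(k) + p (x\<^sub>k\<^sub>+\<^sub>1 - c)\<^sup>+\<close> for the idle type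
  (the correction term vanishing at the boundary \<open>k = 0\<close> resp. \<open>k = K\<close>).
  Concavity of \<open>V\<^sup>n\<close> in \<open>k\<close> is inherited by \<open>E\<^sup>n\<close>, i.e. the marginal values \<open>x\<^sub>k\<close>
  decrease. The increments of \<open>V\<^sup>n\<^sup>+\<^sup>1\<close> then decrease as well, because
  \<open>x \<mapsto> x + q (b - x)\<^sup>+\<close> and \<open>x \<mapsto> x - p (x - c)\<^sup>+\<close> are monotone for
  \<open>q, p \<le> 1\<close>, while \<open>(b - x)\<^sup>+\<close> is antitone and \<open>(x - c)\<^sup>+\<close> monotone.
  Induction on \<open>n\<close> finishes the proof; only \<open>p(s) \<ge> 0\<close>, \<open>\<beta> \<ge> 0\<close> and
  \<open>0 \<le> p, q \<le> 1\<close> are needed.\<close>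

definition expected_value :: "nat \<Rightarrow> (nat \<Rightarrow> real) \<Rightarrow> (nat \<Rightarrow> nat \<Rightarrow> real) \<Rightarrow> nat \<Rightarrow> real" where
  "expected_value N pr W k = (\<Sum>s\<in>{0..N}. pr s * W s k)"

definition concave_in_tokens :: "nat \<Rightarrow> nat \<Rightarrow> (nat \<Rightarrow> nat \<Rightarrow> real) \<Rightarrow> bool" where
  "concave_in_tokens N K W \<longleftrightarrow>
     (\<forall>s k. s \<le> N \<longrightarrow> 1 \<le> k \<longrightarrow> k \<le> K - 1 \<longrightarrow> W s (k + 1) - W s k \<le> W s k - W s (k - 1))"

lemma expected_value_diff:
  "(\<Sum>s\<in>{0..N}. pr s * (W s i - W s j)) = expected_value N pr W i - expected_value N pr W j"
  by (simp add: expected_value_def right_diff_distrib sum_subtractf)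

lemma expected_value_concave:
  assumes "concave_in_tokens N K W" "\<And>s. s \<le> N \<Longrightarrow> 0 \<le> pr s" "1 \<le> k" "k \<le> K - 1"
  shows "expected_value N pr W (k + 1) - expected_value N pr W k
      \<le> expected_value N pr W k - expected_value N pr W (k - 1)"
proof -
  have "(expected_value N pr W (k + 1) - expected_value N pr W k)
        - (expected_value N pr W k - expected_value N pr W (k - 1))
      = (\<Sum>s\<in>{0..N}. pr s * ((W s (k + 1) - W s k) - (W s k - W s (k - 1))))"
    by (simp add: expected_value_def sum_subtractf[symmetric] algebra_simps)
  also have "\<dots> \<le> 0"
  proof (rule sum_nonpos)
    fix s assume "s \<in> {0..N}"
    then have "s \<le> N" by simp
    then have "W s (k + 1) - W s k \<le> W s k - W s (k - 1)"
      using assms(1,3,4) unfolding concave_in_tokens_def by blast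
    with \<open>s \<le> N\<close> show "pr s * ((W s (k + 1) - W s k) - (W s k - W s (k - 1))) \<le> 0"
      by (intro mult_nonneg_nonpos) (simp_all add: assms(2))
  qed
  finally show ?thesis by simp
qed

lemma sum_two_point:
  fixes w :: "nat \<Rightarrow> real"
  assumes "i \<le> K" "j \<le> K" "i \<noteq> j"
  shows "(\<Sum>k\<in>{0..K}. (if k = i then x else if k = j then y else 0) * w k) = x * w i + y * w j"
proof -
  have "(\<Sum>k\<in>{0..K}. (if k = i then x else if k = j then y else 0) * w k)
      = (\<Sum>k\<in>{0..K}. (if k = i then x * w i else 0) + (if k = j then y * w j else 0))"
    using assms by (intro sum.cong) auto
  also have "\<dots> = x * w i + y * w j"
    using assms by (simp add: sum.distrib)
  finally show ?thesis .
qed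

lemma sum_one_point:
  fixes w :: "nat \<Rightarrow> real"
  assumes "i \<le> K"
  shows "(\<Sum>k\<in>{0..K}. (if k = i then x else 0) * w k) = x * w i"
proof -
  have "(\<Sum>k\<in>{0..K}. (if k = i then x else 0) * w k) = (\<Sum>k\<in>{0..K}. if k = i then x * w i else 0)"
    by (intro sum.cong) auto
  then show ?thesis
    using assms by simp
qed

lemma expected_value_two_point:
  assumes "i \<le> K" "j \<le> K" "i \<noteq> j"
  shows "(\<Sum>s\<in>{0..N}. \<Sum>k\<in>{0..K}.
           (if k = i then pr s * x else if k = j then pr s * y else 0) * W s k)
       = x * expected_value N pr W i + y * expected_value N pr W j"
proof -
  have "(\<Sum>k\<in>{0..K}. (if k = i then pr s * x else if k = j then pr s * y else 0) * W s k)
      = x * (pr s * W s i) + y * (pr s * W s j)" for s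
    using assms by (simp add: sum_two_point)
  then show ?thesis
    by (simp add: expected_value_def sum.distrib sum_distrib_left)
qed

lemma expected_value_one_point:
  assumes "i \<le> K"
  shows "(\<Sum>s\<in>{0..N}. \<Sum>k\<in>{0..K}. (if k = i then pr s else 0) * W s k)
       = expected_value N pr W i"
  using assms by (simp add: sum_one_point expected_value_def)

lemma transition_expectation_busy:
  assumes "s \<noteq> 0" "0 < k" "k \<le> K"
  shows "(\<Sum>s'\<in>{0..N}. \<Sum>k'\<in>{0..K}. trans K pr p q s k a s' k' * W s' k')
       = (1 - q * real a) * expected_value N pr W k + q * real a * expected_value N pr W (k - 1)"
proof -
  have "trans K pr p q s k a s' k'
      = (if k' = k then pr s' * (1 - q * real a) else if k' = k - 1 then pr s' * (q * real a) else 0)"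
    for s' k'
    using assms by (simp add: trans_def algebra_simps)
  then show ?thesis
    using assms by (simp add: expected_value_two_point)
qed

lemma transition_expectation_busy_empty:
  assumes "s \<noteq> 0"
  shows "(\<Sum>s'\<in>{0..N}. \<Sum>k'\<in>{0..K}. trans K pr p q s 0 a s' k' * W s' k')
       = expected_value N pr W 0"
proof -
  have "trans K pr p q s 0 a s' k' = (if k' = 0 then pr s' else 0)" for s' k'
    using assms by (simp add: trans_def)
  then show ?thesis
    by (simp add: expected_value_one_point)
qed

lemma transition_expectation_idle:
  assumes "k < K"
  shows "(\<Sum>s'\<in>{0..N}. \<Sum>k'\<in>{0..K}. trans K pr p q 0 k a s' k' * W s' k')
       = (1 - p * (1 - real a)) * expected_value N pr W k
         + p * (1 - real a) * expected_value N pr W (k + 1)"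
proof -
  have "trans K pr p q 0 k a s' k'
      = (if k' = k then pr s' * (1 - p * (1 - real a))
         else if k' = k + 1 then pr s' * (p * (1 - real a)) else 0)"
    for s' k'
    using assms by (simp add: trans_def algebra_simps)
  then show ?thesis
    using assms by (simp add: expected_value_two_point)
qed

lemma transition_expectation_idle_full:
  "(\<Sum>s'\<in>{0..N}. \<Sum>k'\<in>{0..K}. trans K pr p q 0 K a s' k' * W s' k')
     = expected_value N pr W K"
proof -
  have "trans K pr p q 0 K a s' k' = (if k' = K then pr s' else 0)" for s' k'
    by (simp add: trans_def)
  then show ?thesis
    by (simp add: expected_value_one_point)
qed

lemma VI_Suc_busy:
  fixes N K n :: nat and pr b :: "nat \<Rightarrow> real" and c p q \<beta> :: real
  assumes "s \<noteq> 0" "1 \<le> k" "k \<le> K"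
  defines "E \<equiv> expected_value N pr (VI N K pr b c p q \<beta> n)"
  shows "VI N K pr b c p q \<beta> (Suc n) s k = \<beta> * E k + q * max 0 (b s - \<beta> * (E k - E (k - 1)))"
proof -
  have "policy N K pr b c \<beta> (VI N K pr b c p q \<beta> n) s k
      = (if \<beta> * (E k - E (k - 1)) \<ge> b s then 0 else 1)"
    using assms by (simp add: policy_def expected_value_diff)
  then show ?thesis
    using assms
    by (cases "\<beta> * (E k - E (k - 1)) \<ge> b s")
       (simp_all add: Let_def transition_expectation_busy reward_def algebra_simps)
qed

lemma VI_Suc_busy_empty:
  assumes "s \<noteq> 0"
  shows "VI N K pr b c p q \<beta> (Suc n) s 0 = \<beta> * expected_value N pr (VI N K pr b c p q \<beta> n) 0"
  using assms by (simp add: Let_def transition_expectation_busy_empty policy_def reward_def)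

lemma VI_Suc_idle:
  fixes N K n :: nat and pr b :: "nat \<Rightarrow> real" and c p q \<beta> :: real
  assumes "k < K"
  defines "E \<equiv> expected_value N pr (VI N K pr b c p q \<beta> n)"
  shows "VI N K pr b c p q \<beta> (Suc n) 0 k = \<beta> * E k + p * max 0 (\<beta> * (E (k + 1) - E k) - c)"
proof -
  have "policy N K pr b c \<beta> (VI N K pr b c p q \<beta> n) 0 k
      = (if \<beta> * (E (k + 1) - E k) \<ge> c then 0 else 1)"
    using assms by (simp add: policy_def expected_value_diff)
  then show ?thesis
    using assms
    by (cases "\<beta> * (E (k + 1) - E k) \<ge> c")
       (simp_all add: Let_def transition_expectation_idle reward_def algebra_simps)
qed

lemma VI_Suc_idle_full:
  "VI N K pr b c p q \<beta> (Suc n) 0 K = \<beta> * expected_value N pr (VI N K pr b c p q \<beta> n) K"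
  by (simp add: Let_def transition_expectation_idle_full policy_def reward_def)

lemma add_scaled_pos_part_mono:
  fixes x y q b :: real
  assumes "x \<le> y" "0 \<le> q" "q \<le> 1"
  shows "x + q * max 0 (b - x) \<le> y + q * max 0 (b - y)"
proof -
  have "max 0 (b - x) - max 0 (b - y) \<le> y - x"
    using assms(1) by (simp add: max_def)
  then have "q * (max 0 (b - x) - max 0 (b - y)) \<le> q * (y - x)"
    using assms(2) by (rule mult_left_mono)
  also have "\<dots> \<le> y - x"
    using assms by (simp add: mult_left_le_one_le)
  finally show ?thesis
    by (simp add: right_diff_distrib)
qed

lemma diff_scaled_pos_part_mono:
  fixes x y p c :: real
  assumes "x \<le> y" "0 \<le> p" "p \<le> 1"
  shows "x - p * max 0 (x - c) \<le> y - p * max 0 (y - c)"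
proof -
  have "max 0 (y - c) - max 0 (x - c) \<le> y - x"
    using assms(1) by (simp add: max_def)
  then have "p * (max 0 (y - c) - max 0 (x - c)) \<le> p * (y - x)"
    using assms(2) by (rule mult_left_mono)
  also have "\<dots> \<le> y - x"
    using assms by (simp add: mult_left_le_one_le)
  finally show ?thesis
    by (simp add: right_diff_distrib)
qed

lemma VI_Suc_concave_busy:
  fixes N K n :: nat and pr b :: "nat \<Rightarrow> real" and c p q \<beta> :: real
  defines "V \<equiv> VI N K pr b c p q \<beta> (Suc n)"
    and "E \<equiv> expected_value N pr (VI N K pr b c p q \<beta> n)"
  assumes "concave_in_tokens N K (VI N K pr b c p q \<beta> n)" "\<And>s. s \<le> N \<Longrightarrow> 0 \<le> pr s"
    and "0 \<le> \<beta>" "0 \<le> q" "q \<le> 1"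
    and "s \<noteq> 0" and k: "1 \<le> k" "k \<le> K - 1"
  shows "V s (k + 1) - V s k \<le> V s k - V s (k - 1)"
proof -
  define x where "x j = \<beta> * (E j - E (j - 1))" for j
  define m where "m j = q * max 0 (b s - x j)" for j
  have x_antitone: "x (j + 1) \<le> x j" if "1 \<le> j" "j \<le> K - 1" for j
    using expected_value_concave[OF assms(3,4) that] \<open>0 \<le> \<beta>\<close>
    by (simp add: E_def x_def mult_left_mono)
  have V_eq: "V s j = \<beta> * E j + m j" if "1 \<le> j" "j \<le> K" for j
    using VI_Suc_busy[OF \<open>s \<noteq> 0\<close> that] by (simp add: V_def E_def m_def x_def)
  obtain r where r: "V s (k - 1) = \<beta> * E (k - 1) + r" "r \<le> m k"
  proof (cases "k = 1")
    case True
    then show ?thesis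
      using that[of 0] VI_Suc_busy_empty[OF \<open>s \<noteq> 0\<close>] \<open>0 \<le> q\<close>
      by (simp add: V_def E_def m_def)
  next
    case False
    have "1 \<le> k - 1" "k - 1 \<le> K - 1"
      using False k by auto
    from x_antitone[OF this] have "max 0 (b s - x (k - 1)) \<le> max 0 (b s - x k)"
      using k by (intro max.mono) simp_all
    then have "m (k - 1) \<le> m k"
      using \<open>0 \<le> q\<close> by (simp add: m_def mult_left_mono)
    then show ?thesis
      using that V_eq[of "k - 1"] False k by simp
  qed
  have "x (k + 1) + m (k + 1) \<le> x k + m k"
    unfolding m_def using x_antitone[OF k] \<open>0 \<le> q\<close> \<open>q \<le> 1\<close> by (rule add_scaled_pos_part_mono)
  moreover have "x (k + 1) = \<beta> * E (k + 1) - \<beta> * E k" "x k = \<beta> * E k - \<beta> * E (k - 1)"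
    by (simp_all add: x_def right_diff_distrib)
  ultimately show ?thesis
    using V_eq[of k] V_eq[of "k + 1"] r k by simp
qed

lemma VI_Suc_concave_idle:
  fixes N K n :: nat and pr b :: "nat \<Rightarrow> real" and c p q \<beta> :: real
  defines "V \<equiv> VI N K pr b c p q \<beta> (Suc n)"
    and "E \<equiv> expected_value N pr (VI N K pr b c p q \<beta> n)"
  assumes "concave_in_tokens N K (VI N K pr b c p q \<beta> n)" "\<And>s. s \<le> N \<Longrightarrow> 0 \<le> pr s"
    and "0 \<le> \<beta>" "0 \<le> p" "p \<le> 1"
    and k: "1 \<le> k" "k \<le> K - 1"
  shows "V 0 (k + 1) - V 0 k \<le> V 0 k - V 0 (k - 1)"
proof -
  define x where "x j = \<beta> * (E j - E (j - 1))" for j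
  define m where "m j = p * max 0 (x j - c)" for j
  have x_antitone: "x (j + 1) \<le> x j" if "1 \<le> j" "j \<le> K - 1" for j
    using expected_value_concave[OF assms(3,4) that] \<open>0 \<le> \<beta>\<close>
    by (simp add: E_def x_def mult_left_mono)
  have V_eq: "V 0 j = \<beta> * E j + m (j + 1)" if "j < K" for j
    using VI_Suc_idle[OF that] by (simp add: V_def E_def m_def x_def)
  obtain r where r: "V 0 (k + 1) = \<beta> * E (k + 1) + r" "r \<le> m (k + 1)"
  proof (cases "k + 1 = K")
    case True
    then show ?thesis
      using that[of 0] VI_Suc_idle_full \<open>0 \<le> p\<close>
      by (simp add: V_def E_def m_def)
  next
    case False
    have "1 \<le> k + 1" "k + 1 \<le> K - 1"
      using False k by auto
    from x_antitone[OF this] have "max 0 (x (k + 2) - c) \<le> max 0 (x (k + 1) - c)"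
      by (intro max.mono) simp_all
    then have "m (k + 2) \<le> m (k + 1)"
      using \<open>0 \<le> p\<close> by (simp add: m_def mult_left_mono)
    then show ?thesis
      using that V_eq[of "k + 1"] False k by simp
  qed
  have "x (k + 1) - m (k + 1) \<le> x k - m k"
    unfolding m_def using x_antitone[OF k] \<open>0 \<le> p\<close> \<open>p \<le> 1\<close> by (rule diff_scaled_pos_part_mono)
  moreover have "x (k + 1) = \<beta> * E (k + 1) - \<beta> * E k" "x k = \<beta> * E k - \<beta> * E (k - 1)"
    by (simp_all add: x_def right_diff_distrib)
  ultimately show ?thesis
    using V_eq[of k] V_eq[of "k - 1"] r k by simp
qed

lemma VI_concave_in_tokens:
  assumes "\<And>s. s \<le> N \<Longrightarrow> 0 \<le> pr s"
    and "0 \<le> \<beta>" "0 \<le> p" "p \<le> 1" "0 \<le> q" "q \<le> 1"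
  shows "concave_in_tokens N K (VI N K pr b c p q \<beta> n)"
proof (induction n)
  case 0
  show ?case
    by (simp add: concave_in_tokens_def)
next
  case (Suc n)
  show ?case
    unfolding concave_in_tokens_def
  proof (intro allI impI)
    fix s k assume "s \<le> N" "1 \<le> k" "k \<le> K - 1"
    then show "VI N K pr b c p q \<beta> (Suc n) s (k + 1) - VI N K pr b c p q \<beta> (Suc n) s k
        \<le> VI N K pr b c p q \<beta> (Suc n) s k - VI N K pr b c p q \<beta> (Suc n) s (k - 1)"
      using VI_Suc_concave_busy[OF Suc.IH] VI_Suc_concave_idle[OF Suc.IH] assms
      by (cases "s = 0") simp_all
  qed
qed

theorem theorem1:
  fixes N K :: nat and pr b :: "nat \<Rightarrow> real" and c p q \<beta> :: real
  assumes "1 \<le> N"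
    and "\<And>s. s \<le> N \<Longrightarrow> 0 < pr s \<and> pr s < 1"
    and "(\<Sum>s\<in>{0..N}. pr s) = 1"
    and "0 < b 1"
    and "\<And>i j. 1 \<le> i \<Longrightarrow> i < j \<Longrightarrow> j \<le> N \<Longrightarrow> b i < b j"
    and "1 \<le> K" and "0 < c"
    and "0 < p" "p < 1" "0 < q" "q < 1" "0 < \<beta>" "\<beta> < 1"
  shows "\<forall>n s k. s \<le> N \<longrightarrow> 1 \<le> k \<longrightarrow> k \<le> K - 1 \<longrightarrow>
     VI N K pr b c p q \<beta> n s (k + 1) - VI N K pr b c p q \<beta> n s k
       \<le> VI N K pr b c p q \<beta> n s k - VI N K pr b c p q \<beta> n s (k - 1)"
proof -
  have "concave_in_tokens N K (VI N K pr b c p q \<beta> n)" for n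
    by (rule VI_concave_in_tokens) (use assms(2,8-13) in \<open>auto simp: less_imp_le\<close>)
  then show ?thesis
    by (simp add: concave_in_tokens_def)
qed

end
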